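(* Let $m,K$ be positive integers and $b_1,\dots,b_{3m}$ positive integers with $K/4<b_i<K/2$ and $\sum_i b_i=mK$. Set $W=100(5m)^2K$, $a_i=b_i+W$, $L=3W+K$, $\epsilon=1/(400(5m)^2)$, $h=\lfloor 4\epsilon L\rfloor$, $H=L+h$, $\beta_0=h/H$, $\beta_i=a_i/H-1/3$ ($1\le i\le 3m$). Let $X$ be the multiset consisting of $a_1,\dots,a_{3m}$, $m$ copies of $-H$ and $m$ copies of $h$, and let $T_{\min}$ be a minimum-cost addition tree over $X$. Then in $T_{\min}$, if two sibling nodes are such that one of them is a type-0 node, the other is also a type-0 node.
   Context: An addition tree over a multiset $X$ is a full binary tree whose leaves are labeled by the elements of $X$ (each used once), each internal node having value equal to the sum of its children's values; its cost is the sum of the absolute values of its internal nodes, and $T_{\min}$ minimizes the cost. A "$\lambda$" denotes a sum of at most $5m$ numbers each of the form $\pm\beta_i$ with $0\le i\le 3m$. Every node value of an addition tree over $X$ can be written as $(N/3+\lambda)H$ with $N$ an integer and $\lambda$ such a sum; since $|\lambda|\le 5m\cdot 4\epsilon=1/(500m)$, the integer $N$ and the real number $\lambda$ are uniquely determined. A node is type-0 if its value is of the form $\lambda H$, i.e. $N=0$. *)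

theory Defs
  imports Main "HOL-Library.Multiset" Complex_Main
begin

datatype atree = Leaf real | Node atree atree

fun leaves :: "atree \<Rightarrow> real multiset" where
  "leaves (Leaf x) = {#x#}"
| "leaves (Node l r) = leaves l + leaves r"

fun tval :: "atree \<Rightarrow> real" where
  "tval (Leaf x) = x"
| "tval (Node l r) = tval l + tval r"

fun cost :: "atree \<Rightarrow> real" where
  "cost (Leaf x) = 0"
| "cost (Node l r) = \<bar>tval l + tval r\<bar> + cost l + cost r"

fun subtrees :: "atree \<Rightarrow> atree set" where
  "subtrees (Leaf x) = {Leaf x}"
| "subtrees (Node l r) = insert (Node l r) (subtrees l \<union> subtrees r)"

definition min_cost_tree :: "real multiset \<Rightarrow> atree \<Rightarrow> bool" where
  "min_cost_tree X T \<longleftrightarrow> leaves T = X \<and> (\<forall>T'. leaves T' = X \<longrightarrow> cost T \<le> cost T')"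

text \<open>A term is encoded as (sign, index), sign True meaning +.\<close>
definition is_type0 :: "nat \<Rightarrow> (nat \<Rightarrow> real) \<Rightarrow> real \<Rightarrow> real \<Rightarrow> bool" where
  "is_type0 m beta H v \<longleftrightarrow>
     (\<exists>cs :: (bool \<times> nat) list. length cs \<le> 5 * m \<and> (\<forall>p\<in>set cs. snd p \<le> 3 * m) \<and>
        v = sum_list (map (\<lambda>(s, i). if s then beta i else - beta i) cs) * H)"

end

theory Submission
  imports Defs
begin

(* Every element of X has the form (N/3 + \<lambda>)H with \<lambda> zero or a single \<plusminus>\<beta>_i, so every node value
  has this form with \<lambda> a signed sum of at most 5m of the \<beta>_i. Since
  \<bar>\<beta>_i\<bar> \<le> 1/(2000m^2), this gives \<bar>\<lambda>\<bar> \<le> 1/(400m): a type-0 node has absolute value at most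
  H/(400m), any other node at least (1/3 - 1/(400m))H. If a type-0 node p had a sibling q not of
  type 0, detach p, let q take the place of their parent and hang p below a new root. The parent,
  of absolute value about H/3, disappears, each of the 5m - 1 old internal nodes changes by at
  most \<bar>p\<bar>, and the new root carries the old root value; so the cost drops, contradicting
  minimality. *)

fun inner_nodes :: "atree \<Rightarrow> nat" where
  "inner_nodes (Leaf x) = 0"
| "inner_nodes (Node l r) = Suc (inner_nodes l + inner_nodes r)"

lemma size_leaves: "size (leaves T) = inner_nodes T + 1"
  by (induction T) auto

lemma tval_eq_sum_leaves: "tval T = sum_mset (leaves T)"
  by (induction T) auto

lemma subtrees_self: "T \<in> subtrees T"
  by (cases T) auto

lemma subtrees_trans: "S \<in> subtrees T \<Longrightarrow> subtrees S \<subseteq> subtrees T"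
  by (induction T) auto

lemma leaves_subtree: "S \<in> subtrees T \<Longrightarrow> leaves S \<subseteq># leaves T"
  by (induction T) (auto intro: subset_mset.order_trans)

(* T' is T with the parent of l replaced by r: the parent's term \<bar>tval l + tval r\<bar> leaves the
  cost, and every other internal node changes its value by at most \<bar>tval l\<bar>. *)
lemma detach_subtree:
  assumes "Node l r \<in> subtrees T \<or> Node r l \<in> subtrees T"
  shows "\<exists>T'. leaves T' + leaves l = leaves T \<and> tval T' + tval l = tval T \<and>
    cost T' + cost l \<le> cost T - \<bar>tval l + tval r\<bar> + \<bar>tval l\<bar> * inner_nodes T"
  using assms
proof (induction T)
  case (Leaf x)
  then show ?case by auto
next
  case (Node A B)
  consider "Node A B = Node l r \<or> Node A B = Node r l"
    | "Node l r \<in> subtrees A \<or> Node r l \<in> subtrees A"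
    | "Node l r \<in> subtrees B \<or> Node r l \<in> subtrees B"
    using Node.prems by auto
  then show ?case
  proof cases
    case 1
    then show ?thesis
      by (intro exI[of _ r]) (auto simp: add.commute)
  next
    case 2
    then obtain A' where A': "leaves A' + leaves l = leaves A" "tval A' + tval l = tval A"
      "cost A' + cost l \<le> cost A - \<bar>tval l + tval r\<bar> + \<bar>tval l\<bar> * inner_nodes A"
      using Node.IH(1) by blast
    have "\<bar>tval A' + tval B\<bar> \<le> \<bar>tval A + tval B\<bar> + \<bar>tval l\<bar>"
      using A'(2) by linarith
    moreover have "\<bar>tval l\<bar> * inner_nodes A + \<bar>tval l\<bar> \<le> \<bar>tval l\<bar> * inner_nodes (Node A B)"
      by (simp add: algebra_simps)
    ultimately show ?thesis
      using A' by (intro exI[of _ "Node A' B"]) (auto simp del: inner_nodes.simps)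
  next
    case 3
    then obtain B' where B': "leaves B' + leaves l = leaves B" "tval B' + tval l = tval B"
      "cost B' + cost l \<le> cost B - \<bar>tval l + tval r\<bar> + \<bar>tval l\<bar> * inner_nodes B"
      using Node.IH(2) by blast
    have "\<bar>tval A + tval B'\<bar> \<le> \<bar>tval A + tval B\<bar> + \<bar>tval l\<bar>"
      using B'(2) by linarith
    moreover have "\<bar>tval l\<bar> * inner_nodes B + \<bar>tval l\<bar> \<le> \<bar>tval l\<bar> * inner_nodes (Node A B)"
      by (simp add: algebra_simps)
    ultimately show ?thesis
      using B' by (intro exI[of _ "Node A B'"]) (auto simp del: inner_nodes.simps simp: ac_simps)
  qed
qed

lemma min_cost_tree_sibling_bound:
  assumes "min_cost_tree X T" and "Node p q \<in> subtrees T \<or> Node q p \<in> subtrees T"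
  shows "\<bar>tval p + tval q\<bar> \<le> \<bar>tval p\<bar> * inner_nodes T + \<bar>tval T\<bar>"
proof -
  obtain T' where T': "leaves T' + leaves p = leaves T" "tval T' + tval p = tval T"
    "cost T' + cost p \<le> cost T - \<bar>tval p + tval q\<bar> + \<bar>tval p\<bar> * inner_nodes T"
    using detach_subtree[OF assms(2)] by blast
  have "cost T \<le> cost (Node T' p)"
    using assms(1) T'(1) unfolding min_cost_tree_def by (metis leaves.simps(2))
  also have "\<dots> = \<bar>tval T\<bar> + cost T' + cost p"
    using T'(2) by simp
  finally show ?thesis
    using T'(3) by simp
qed

definition signed_sum :: "(nat \<Rightarrow> real) \<Rightarrow> (bool \<times> nat) list \<Rightarrow> real" where
  "signed_sum beta cs = sum_list (map (\<lambda>(s, i). if s then beta i else - beta i) cs)"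

lemma signed_sum_append: "signed_sum beta (xs @ ys) = signed_sum beta xs + signed_sum beta ys"
  by (simp add: signed_sum_def)

lemma abs_signed_sum_le:
  fixes B :: real
  assumes "\<forall>i\<le>M. \<bar>beta i\<bar> \<le> B" and "\<forall>p\<in>set cs. snd p \<le> M" and "length cs \<le> k"
  shows "\<bar>signed_sum beta cs\<bar> \<le> k * B"
proof -
  have "\<bar>signed_sum beta cs\<bar> \<le> length cs * B"
    using assms(2)
  proof (induction cs)
    case Nil
    then show ?case by (simp add: signed_sum_def)
  next
    case (Cons p cs)
    have "\<bar>signed_sum beta (p # cs)\<bar> \<le> \<bar>beta (snd p)\<bar> + \<bar>signed_sum beta cs\<bar>"
      by (cases p) (auto simp: signed_sum_def)
    moreover have "\<bar>beta (snd p)\<bar> \<le> B"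
      using Cons.prems assms(1) by simp
    ultimately show ?case
      using Cons by (simp add: algebra_simps)
  qed
  also have "\<dots> \<le> k * B"
    using assms(1,3) by (intro mult_right_mono) force+
  finally show ?thesis .
qed

lemma is_type0_iff_signed_sum:
  "is_type0 m beta H v \<longleftrightarrow>
    (\<exists>cs. length cs \<le> 5 * m \<and> (\<forall>p\<in>set cs. snd p \<le> 3 * m) \<and> v = signed_sum beta cs * H)"
  by (simp add: is_type0_def signed_sum_def)

definition thirds_form :: "nat \<Rightarrow> (nat \<Rightarrow> real) \<Rightarrow> real \<Rightarrow> nat \<Rightarrow> real \<Rightarrow> bool" where
  "thirds_form M beta H k v \<longleftrightarrow>
    (\<exists>N :: int. \<exists>cs. length cs \<le> k \<and> (\<forall>p\<in>set cs. snd p \<le> M) \<and>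
       v = (N / 3 + signed_sum beta cs) * H)"

lemma thirds_form_int: "thirds_form M beta H k (of_int N / 3 * H)"
  unfolding thirds_form_def by (intro exI[of _ N] exI[of _ "[]"]) (simp add: signed_sum_def)

lemma thirds_form_single:
  "i \<le> M \<Longrightarrow> thirds_form M beta H 1 ((of_int N / 3 + beta i) * H)"
  unfolding thirds_form_def by (intro exI[of _ N] exI[of _ "[(True, i)]"]) (simp add: signed_sum_def)

lemma thirds_form_add:
  assumes "thirds_form M beta H k v" and "thirds_form M beta H k' w"
  shows "thirds_form M beta H (k + k') (v + w)"
proof -
  obtain N cs where "length cs \<le> k" "\<forall>p\<in>set cs. snd p \<le> M"
    "v = (of_int N / 3 + signed_sum beta cs) * H"
    using assms(1) by (auto simp: thirds_form_def)
  moreover obtain N' cs' where "length cs' \<le> k'" "\<forall>p\<in>set cs'. snd p \<le> M"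
    "w = (of_int N' / 3 + signed_sum beta cs') * H"
    using assms(2) by (auto simp: thirds_form_def)
  ultimately show ?thesis
    unfolding thirds_form_def
    by (intro exI[of _ "N + N'"] exI[of _ "cs @ cs'"])
       (auto simp: signed_sum_append add_divide_distrib algebra_simps)
qed

lemma thirds_form_sum_mset:
  "\<forall>x\<in>#S. thirds_form M beta H 1 x \<Longrightarrow> thirds_form M beta H (size S) (sum_mset S)"
proof (induction S)
  case empty
  then show ?case using thirds_form_int[of M beta H 0 0] by simp
next
  case (add x S)
  then show ?case using thirds_form_add[of M beta H 1 x "size S"] by simp
qed

lemma abs_le_if_is_type0:
  fixes B :: real
  assumes "\<forall>i\<le>3 * m. \<bar>beta i\<bar> \<le> B" and "0 \<le> H" and "is_type0 m beta H v"
  shows "\<bar>v\<bar> \<le> 5 * m * B * H"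
proof -
  obtain cs where cs: "length cs \<le> 5 * m" "\<forall>p\<in>set cs. snd p \<le> 3 * m"
    "v = signed_sum beta cs * H"
    using assms(3) by (auto simp: is_type0_iff_signed_sum)
  then have "\<bar>signed_sum beta cs\<bar> \<le> 5 * m * B"
    using abs_signed_sum_le[OF assms(1), of cs "5 * m"] by simp
  then show ?thesis
    using cs(3) assms(2) by (simp add: abs_mult mult_right_mono)
qed

lemma abs_ge_if_not_is_type0:
  fixes B :: real
  assumes "\<forall>i\<le>3 * m. \<bar>beta i\<bar> \<le> B" and "0 \<le> H"
    and "thirds_form (3 * m) beta H k v" and "k \<le> 5 * m" and "\<not> is_type0 m beta H v"
  shows "(1 / 3 - 5 * m * B) * H \<le> \<bar>v\<bar>"
proof -
  obtain N :: int and cs where cs: "length cs \<le> k" "\<forall>p\<in>set cs. snd p \<le> 3 * m"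
    "v = (N / 3 + signed_sum beta cs) * H"
    using assms(3) by (auto simp: thirds_form_def)
  have "N \<noteq> 0"
  proof
    assume "N = 0"
    then have "is_type0 m beta H v"
      using cs assms(4) unfolding is_type0_iff_signed_sum by (intro exI[of _ cs]) auto
    with assms(5) show False ..
  qed
  then have "1 / 3 \<le> \<bar>N / 3\<bar>"
    by linarith
  moreover have "\<bar>signed_sum beta cs\<bar> \<le> 5 * m * B"
    using abs_signed_sum_le[OF assms(1) cs(2), of "5 * m"] cs(1) assms(4) by simp
  ultimately have "1 / 3 - 5 * m * B \<le> \<bar>N / 3 + signed_sum beta cs\<bar>"
    by linarith
  then show ?thesis
    using cs(3) assms(2) by (simp add: abs_mult mult_right_mono)
qed

theorem min_cost_tree_type0_siblings:
  fixes B :: real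
  assumes T: "min_cost_tree X T"
    and atoms: "\<forall>x\<in>#X. thirds_form (3 * m) beta H 1 x"
    and size_X: "size X = 5 * m" and sum_X: "sum_mset X = 0" and "0 < H"
    and beta: "\<forall>i\<le>3 * m. \<bar>beta i\<bar> \<le> B"
    and small: "(5 * real m + 1) * (5 * real m * B) < 1 / 3"
    and lr: "Node l r \<in> subtrees T"
  shows "is_type0 m beta H (tval l) \<longleftrightarrow> is_type0 m beta H (tval r)"
proof -
  have False if sib: "Node p q \<in> subtrees T \<or> Node q p \<in> subtrees T"
    and p0: "is_type0 m beta H (tval p)" and q0: "\<not> is_type0 m beta H (tval q)" for p q
  proof -
    define \<delta> where "\<delta> = 5 * real m * B"
    have "q \<in> subtrees T"
      using sib subtrees_trans subtrees_self by fastforce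
    then have sub: "leaves q \<subseteq># X"
      using T leaves_subtree by (auto simp: min_cost_tree_def)
    then have "thirds_form (3 * m) beta H (size (leaves q)) (tval q)"
      using atoms thirds_form_sum_mset tval_eq_sum_leaves by (metis mset_subset_eqD)
    moreover have "size (leaves q) \<le> 5 * m"
      using size_mset_mono[OF sub] size_X by simp
    ultimately have q: "(1 / 3 - \<delta>) * H \<le> \<bar>tval q\<bar>"
      unfolding \<delta>_def using abs_ge_if_not_is_type0 beta \<open>0 < H\<close> q0 by simp
    have p: "\<bar>tval p\<bar> \<le> \<delta> * H"
      unfolding \<delta>_def using abs_le_if_is_type0 beta \<open>0 < H\<close> p0 by simp
    have "real (inner_nodes T) = 5 * real m - 1" and "tval T = 0"
      using T size_leaves[of T] size_X sum_X tval_eq_sum_leaves[of T]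
      by (auto simp: min_cost_tree_def)
    then have "\<bar>tval p + tval q\<bar> \<le> \<bar>tval p\<bar> * (5 * real m - 1)"
      using min_cost_tree_sibling_bound[OF T sib] by simp
    also have "\<dots> \<le> \<delta> * H * (5 * real m - 1)"
      using p \<open>real (inner_nodes T) = 5 * real m - 1\<close> by (intro mult_right_mono) auto
    finally have "(1 / 3 - \<delta>) * H - \<delta> * H \<le> \<delta> * H * (5 * real m - 1)"
      using p q by linarith
    then have "(1 / 3 - (5 * real m + 1) * \<delta>) * H \<le> 0"
      by (simp add: algebra_simps)
    moreover have "0 < (1 / 3 - (5 * real m + 1) * \<delta>) * H"
      using small \<open>0 < H\<close> unfolding \<delta>_def by simp
    ultimately show False
      by linarith
  qed
  then show ?thesis
    using lr by blast
qed

lemma reduction_beta_bound: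
  fixes m K :: nat and b :: "nat \<Rightarrow> nat"
  assumes "m > 0" and "K > 0"
    and b: "\<forall>i\<in>{1..3*m}. real K / 4 < real (b i) \<and> real (b i) < real K / 2"
  defines "W \<equiv> 100 * (5 * real m)^2 * real K"
  defines "a \<equiv> (\<lambda>i. real (b i) + W)"
  defines "L \<equiv> 3 * W + real K"
  defines "eps \<equiv> 1 / (400 * (5 * real m)^2)"
  defines "h \<equiv> real_of_int \<lfloor>4 * eps * L\<rfloor>"
  defines "H \<equiv> L + h"
  defines "beta \<equiv> (\<lambda>i. if i = 0 then h / H else a i / H - 1 / 3)"
  shows "0 < H" and "\<forall>i\<le>3 * m. \<bar>beta i\<bar> \<le> 1 / (2000 * (real m)\<^sup>2)"
proof -
  have m2: "1 \<le> (real m)\<^sup>2"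
    using assms(1) by (simp add: one_le_power)
  have L: "L = 7500 * (real m)\<^sup>2 * real K + real K"
    by (simp add: L_def W_def power_mult_distrib)
  then have "0 < L"
    using assms(2) by (simp add: add_nonneg_pos)
  have "0 \<le> h" and h: "h \<le> L / (2500 * (real m)\<^sup>2)"
    using \<open>0 < L\<close> by (auto simp: h_def eps_def power_mult_distrib)
  then show "0 < H"
    using \<open>0 < L\<close> by (simp add: H_def)
  have "\<bar>beta i\<bar> \<le> 1 / (2000 * (real m)\<^sup>2)" if "i \<le> 3 * m" for i
  proof (cases "i = 0")
    case True
    have "h / H \<le> h / L"
      using \<open>0 < L\<close> \<open>0 \<le> h\<close> by (simp add: H_def divide_left_mono)
    also have "\<dots> \<le> 1 / (2500 * (real m)\<^sup>2)"
      using h \<open>0 < L\<close> by (simp add: divide_simps mult.commute)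
    also have "\<dots> \<le> 1 / (2000 * (real m)\<^sup>2)"
      using m2 by (simp add: divide_simps)
    finally show ?thesis
      using True \<open>0 \<le> h\<close> \<open>0 < H\<close> by (simp add: beta_def)
  next
    case False
    then have bi: "real K / 4 < real (b i)" "real (b i) < real K / 2"
      using b that by auto
    have "\<bar>beta i\<bar> = \<bar>3 * real (b i) - real K - h\<bar> / (3 * H)"
      using False \<open>0 < H\<close> by (simp add: beta_def a_def H_def L_def field_simps abs_divide)
    also have "\<dots> \<le> (real K + h) / (3 * L)"
      using bi \<open>0 < L\<close> \<open>0 \<le> h\<close> by (intro frac_le) (auto simp: H_def)
    also have "\<dots> \<le> (L / (7500 * (real m)\<^sup>2) + L / (2500 * (real m)\<^sup>2)) / (3 * L)"
    proof -
      have "real K \<le> L / (7500 * (real m)\<^sup>2)"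
        using assms(1) by (subst pos_le_divide_eq) (auto simp: L)
      then show ?thesis
        using h \<open>0 < L\<close> by (intro divide_right_mono add_mono) auto
    qed
    also have "\<dots> = 1 / (5625 * (real m)\<^sup>2)"
      using \<open>0 < L\<close> m2 by (simp add: field_simps)
    also have "\<dots> \<le> 1 / (2000 * (real m)\<^sup>2)"
      using m2 by (simp add: divide_simps)
    finally show ?thesis .
  qed
  then show "\<forall>i\<le>3 * m. \<bar>beta i\<bar> \<le> 1 / (2000 * (real m)\<^sup>2)"
    by blast
qed

lemma reduction_multiset:
  fixes m K :: nat and b :: "nat \<Rightarrow> nat" and h :: real
  assumes "(\<Sum>i\<in>{1..3*m}. b i) = m * K"
  defines "W \<equiv> 100 * (5 * real m)^2 * real K"
  defines "a \<equiv> (\<lambda>i. real (b i) + W)"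
  defines "L \<equiv> 3 * W + real K"
  defines "H \<equiv> L + h"
  defines "beta \<equiv> (\<lambda>i. if i = 0 then h / H else a i / H - 1 / 3)"
  defines "X \<equiv> image_mset a (mset_set {1..3*m}) + replicate_mset m (- H) + replicate_mset m h"
  assumes "H \<noteq> 0"
  shows "\<forall>x\<in>#X. thirds_form (3 * m) beta H 1 x" and "size X = 5 * m" and "sum_mset X = 0"
proof -
  have "a i = (1 / 3 + beta i) * H" if "i \<noteq> 0" for i
    using that \<open>H \<noteq> 0\<close> by (simp add: beta_def field_simps)
  then have "thirds_form (3 * m) beta H 1 (a i)" if "i \<in> {1..3*m}" for i
    using that thirds_form_single[of i "3 * m" beta H 1] by simp
  moreover have "thirds_form (3 * m) beta H 1 h"
    using thirds_form_single[of 0 "3 * m" beta H 0] \<open>H \<noteq> 0\<close> by (simp add: beta_def)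
  moreover have "thirds_form (3 * m) beta H 1 (- H)"
    using thirds_form_int[where N = "- 3"] by simp
  ultimately show "\<forall>x\<in>#X. thirds_form (3 * m) beta H 1 x"
    unfolding X_def by auto
  show "size X = 5 * m"
    by (simp add: X_def)
  have "(\<Sum>i\<in>{1..3*m}. real (b i)) = real m * real K"
    using arg_cong[OF assms(1), of real] by simp
  then show "sum_mset X = 0"
    by (simp add: X_def a_def sum.distrib H_def L_def sum_unfold_sum_mset[symmetric] algebra_simps)
qed

theorem lemma2p5:
  fixes m K :: nat and b :: "nat \<Rightarrow> nat" and T :: atree
  assumes "m > 0" and "K > 0"
    and "\<forall>i\<in>{1..3*m}. b i > 0"
    and "\<forall>i\<in>{1..3*m}. real K / 4 < real (b i) \<and> real (b i) < real K / 2"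
    and "(\<Sum>i\<in>{1..3*m}. b i) = m * K"
  defines "W \<equiv> 100 * (5 * real m)^2 * real K"
  defines "a \<equiv> (\<lambda>i. real (b i) + W)"
  defines "L \<equiv> 3 * W + real K"
  defines "eps \<equiv> 1 / (400 * (5 * real m)^2)"
  defines "h \<equiv> real_of_int \<lfloor>4 * eps * L\<rfloor>"
  defines "H \<equiv> L + h"
  defines "beta \<equiv> (\<lambda>i. if i = 0 then h / H else a i / H - 1 / 3)"
  defines "X \<equiv> image_mset a (mset_set {1..3*m}) + replicate_mset m (- H) + replicate_mset m h"
  assumes "min_cost_tree X T"
  shows "\<forall>l r. Node l r \<in> subtrees T \<longrightarrow>
           (is_type0 m beta H (tval l) \<longleftrightarrow> is_type0 m beta H (tval r))"
proof -
  have "0 < H" and "\<forall>i\<le>3 * m. \<bar>beta i\<bar> \<le> 1 / (2000 * (real m)\<^sup>2)"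
    using reduction_beta_bound[OF assms(1,2,4)]
    unfolding W_def a_def L_def eps_def h_def H_def beta_def by auto
  moreover have "\<forall>x\<in>#X. thirds_form (3 * m) beta H 1 x" and "size X = 5 * m" and "sum_mset X = 0"
    using reduction_multiset[OF assms(5), of h] \<open>0 < H\<close>
    unfolding W_def a_def L_def H_def beta_def X_def by auto
  moreover have "(5 * real m + 1) * (5 * real m * (1 / (2000 * (real m)\<^sup>2))) < 1 / 3"
    using assms(1) by (simp add: power2_eq_square field_simps)
  ultimately show ?thesis
    using min_cost_tree_type0_siblings[OF assms(14)] by blast
qed

end
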